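(* Fix $\sigma>0$. For $\mathsf{A}>0$ and $\mathcal{E}>0$ let $\mathsf{C}(\mathsf{A},\mathcal{E})=\sup I(X;Y)$, where $Y=X+Z$ with $Z\sim\mathcal{N}(0,\sigma^2)$ independent of $X$, and the supremum is over all distributions of $X$ with $X\ge 0$ almost surely, $\Pr[X>\mathsf{A}]=0$ and $\mathbb{E}[X]\le\mathcal{E}$. Suppose $\alpha=\mathcal{E}/\mathsf{A}$ satisfies $\tfrac12<\alpha\le 1$. Then the capacity-achieving input distribution $Q^*$ (which is unique) satisfies $\mathbb{E}_{Q^*}[X]/\mathsf{A}=\tfrac12$, irrespective of $\alpha$. In particular, the average-power constraint is inactive and $$\mathsf{C}(\mathsf{A},\alpha\mathsf{A})=\mathsf{C}\!\left(\mathsf{A},\tfrac{\mathsf{A}}{2}\right),\qquad \tfrac12<\alpha\le 1.$$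
   Context: Free-space optical intensity channel: input $X\ge 0$ (optical intensity), output $Y=X+Z$ with additive Gaussian noise $Z\sim\mathcal{N}(0,\sigma^2)$ independent of $X$. $\mathsf{A}$ is the peak-power constraint, $\mathcal{E}$ the average-power constraint, and $\alpha=\mathcal{E}/\mathsf{A}\in(0,1]$ their ratio. Mutual information is measured in nats. *)

theory Defs
  imports "HOL-Probability.Probability"
begin

definition chan_space :: "real \<Rightarrow> real measure \<Rightarrow> (real \<times> real) measure" where
  "chan_space \<sigma> Q = Q \<Otimes>\<^sub>M density lborel (normal_density 0 \<sigma>)"

definition chan_MI :: "real \<Rightarrow> real measure \<Rightarrow> real" where
  "chan_MI \<sigma> Q = prob_space.mutual_information (chan_space \<sigma> Q) (exp 1) borel borel
      fst (\<lambda>(x, z). x + z)"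

definition admissible :: "real \<Rightarrow> real \<Rightarrow> real measure \<Rightarrow> bool" where
  "admissible A E Q \<longleftrightarrow> prob_space Q \<and> sets Q = sets borel \<and>
     (AE x in Q. 0 \<le> x) \<and> measure Q {x. x > A} = 0 \<and> (\<integral>x. x \<partial>Q) \<le> E"

definition capacity :: "real \<Rightarrow> real \<Rightarrow> real \<Rightarrow> real" where
  "capacity \<sigma> A E = Sup (chan_MI \<sigma> ` {Q. admissible A E Q})"

definition achieves_capacity :: "real \<Rightarrow> real \<Rightarrow> real \<Rightarrow> real measure \<Rightarrow> bool" where
  "achieves_capacity \<sigma> A E Q \<longleftrightarrow> admissible A E Q \<and> chan_MI \<sigma> Q = capacity \<sigma> A E"

end

theory Submission
  imports Defs
begin

text \<open>For an input law \<open>Q\<close> on \<open>[0, A]\<close> the output \<open>Y = X + Z\<close> has the density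
  \<open>p\<^sub>Q = Q * \<phi>\<close>, which is squeezed between two Gaussians; hence \<open>I(X;Y) = h(p\<^sub>Q) - h(\<phi>)\<close>
  and the capacity problem becomes the maximisation of the differential entropy \<open>h(p\<^sub>Q)\<close>
  over laws on \<open>[0, A]\<close>. These laws are tight and \<open>h(p\<^sub>Q)\<close> is continuous under weak
  convergence (dominated convergence, with the Gaussian bounds as majorant), so a maximiser
  exists. It is unique because \<open>x ln x\<close> is strictly convex and \<open>Q \<mapsto> p\<^sub>Q\<close> is injective
  (the Gaussian characteristic function has no zeros). The reflection \<open>x \<mapsto> A - x\<close> preserves
  \<open>h(p\<^sub>Q)\<close>, so the maximiser is symmetric and has mean \<open>A/2\<close>: it is admissible, and optimal,
  for every average-power bound \<open>E \<ge> A/2\<close>.\<close>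

section \<open>Convexity and mixtures\<close>

lemma xlnx_above_tangent:
  fixes a m :: real
  assumes a: "0 < a" and m: "0 < m"
  shows "a * ln m + (a - m) \<le> a * ln a"
    and "a * ln m + (a - m) = a * ln a \<Longrightarrow> a = m"
proof -
  have q: "0 < m / a" using a m by simp
  have l: "ln (m / a) = ln m - ln a" using a m by (simp add: ln_div)
  have "a * ln (m / a) \<le> a * (m / a - 1)"
    using ln_le_minus_one[OF q] a by (intro mult_left_mono) auto
  also have "a * (m / a - 1) = m - a" using a by (simp add: field_simps)
  finally show "a * ln m + (a - m) \<le> a * ln a" unfolding l by (simp add: algebra_simps)
  assume "a * ln m + (a - m) = a * ln a"
  then have "ln (m / a) = m / a - 1" using a unfolding l by (simp add: field_simps)
  then have "m / a = 1" by (rule ln_eq_minus_one[OF q])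
  then show "a = m" using a by (simp add: field_simps)
qed

lemma xlnx_midpoint_convex:
  fixes a b :: real
  assumes a: "0 < a" and b: "0 < b"
  shows "(a + b) / 2 * ln ((a + b) / 2) \<le> (a * ln a + b * ln b) / 2"
    and "(a + b) / 2 * ln ((a + b) / 2) = (a * ln a + b * ln b) / 2 \<Longrightarrow> a = b"
proof -
  define m where "m = (a + b) / 2"
  have m: "0 < m" using a b by (simp add: m_def)
  note ta = xlnx_above_tangent[OF a m] and tb = xlnx_above_tangent[OF b m]
  have e: "m * ln m = (a * ln m + (a - m) + (b * ln m + (b - m))) / 2"
    by (simp add: m_def field_simps)
  show "(a + b) / 2 * ln ((a + b) / 2) \<le> (a * ln a + b * ln b) / 2"
    using ta(1) tb(1) unfolding m_def[symmetric] e by simp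
  assume "(a + b) / 2 * ln ((a + b) / 2) = (a * ln a + b * ln b) / 2"
  then have "a * ln m + (a - m) + (b * ln m + (b - m)) = a * ln a + b * ln b"
    unfolding m_def[symmetric] e by simp
  then have "a * ln m + (a - m) = a * ln a" using ta(1) tb(1) by linarith
  then show "a = b" using ta(2) by (simp add: m_def)
qed

lemma exists_mixture:
  assumes Q0: "real_distribution Q0" and Q1: "real_distribution Q1"
  obtains Qm where "real_distribution Qm"
    and "\<And>(h :: real \<Rightarrow> real) B. h \<in> borel_measurable borel \<Longrightarrow> (\<And>x. \<bar>h x\<bar> \<le> B) \<Longrightarrow>
           (\<integral>x. h x \<partial>Qm) = ((\<integral>x. h x \<partial>Q0) + (\<integral>x. h x \<partial>Q1)) / 2"
proof -
  define C where "C = measure_pmf (pmf_of_set (UNIV :: bool set))"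
  interpret C: prob_space C unfolding C_def by (rule measure_pmf.prob_space_axioms)
  interpret Q0: real_distribution Q0 by fact
  interpret Q1: real_distribution Q1 by fact
  interpret P01: pair_prob_space Q0 Q1 ..
  have P01: "prob_space (Q0 \<Otimes>\<^sub>M Q1)" by unfold_locales
  interpret P: pair_prob_space C "Q0 \<Otimes>\<^sub>M Q1"
    using C.prob_space_axioms P01
    by (simp add: pair_prob_space_def pair_sigma_finite_def prob_space_imp_sigma_finite)
  have PM: "prob_space (C \<Otimes>\<^sub>M (Q0 \<Otimes>\<^sub>M Q1))" by unfold_locales
  \<comment> \<open>flip a fair coin, then report a sample of \<open>Q0\<close> or of \<open>Q1\<close>\<close>
  define g where "g = (\<lambda>\<omega>::bool \<times> (real \<times> real). if fst \<omega> then fst (snd \<omega>) else snd (snd \<omega>))"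
  have coin: "{\<omega> \<in> space (C \<Otimes>\<^sub>M (Q0 \<Otimes>\<^sub>M Q1)). fst \<omega>} \<in> sets (C \<Otimes>\<^sub>M (Q0 \<Otimes>\<^sub>M Q1))"
  proof -
    have "{\<omega> \<in> space (C \<Otimes>\<^sub>M (Q0 \<Otimes>\<^sub>M Q1)). fst \<omega>} = {True} \<times> space (Q0 \<Otimes>\<^sub>M Q1)"
      by (auto simp: space_pair_measure C_def)
    moreover have "{True} \<times> space (Q0 \<Otimes>\<^sub>M Q1) \<in> sets (C \<Otimes>\<^sub>M (Q0 \<Otimes>\<^sub>M Q1))"
      by (rule pair_measureI[OF _ sets.top]) (simp add: C_def)
    ultimately show ?thesis by simp
  qed
  have f0: "fst \<in> measurable (Q0 \<Otimes>\<^sub>M Q1) borel"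
    using measurable_fst[of Q0 Q1] by (simp add: measurable_cong_sets[OF refl Q0.events_eq_borel])
  have s0: "snd \<in> measurable (Q0 \<Otimes>\<^sub>M Q1) borel"
    using measurable_snd[of Q0 Q1] by (simp add: measurable_cong_sets[OF refl Q1.events_eq_borel])
  have g[measurable]: "g \<in> measurable (C \<Otimes>\<^sub>M (Q0 \<Otimes>\<^sub>M Q1)) borel"
    unfolding g_def
    by (rule measurable_If[OF measurable_compose[OF measurable_snd f0]
          measurable_compose[OF measurable_snd s0] coin])
  define Qm where "Qm = distr (C \<Otimes>\<^sub>M (Q0 \<Otimes>\<^sub>M Q1)) borel g"
  have "real_distribution Qm"
    unfolding Qm_def real_distribution_def real_distribution_axioms_def
    using prob_space.prob_space_distr[OF PM g] by simp
  moreover have "(\<integral>x. h x \<partial>Qm) = ((\<integral>x. h x \<partial>Q0) + (\<integral>x. h x \<partial>Q1)) / 2"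
    if [measurable]: "h \<in> borel_measurable borel" and hB: "\<And>x. \<bar>h x\<bar> \<le> B"
    for h :: "real \<Rightarrow> real" and B
  proof -
    have int: "integrable (C \<Otimes>\<^sub>M (Q0 \<Otimes>\<^sub>M Q1)) (\<lambda>\<omega>. h (g \<omega>))"
      by (rule P.integrable_const_bound[where B=B]) (use hB in auto)
    have int0: "integrable (Q0 \<Otimes>\<^sub>M Q1) (\<lambda>p. h (fst p))"
      and int1: "integrable (Q0 \<Otimes>\<^sub>M Q1) (\<lambda>p. h (snd p))"
      by (rule P01.integrable_const_bound[where B=B]; use hB in simp)+
    have "(\<integral>x. h x \<partial>Qm) = (\<integral>\<omega>. h (g \<omega>) \<partial>(C \<Otimes>\<^sub>M (Q0 \<Otimes>\<^sub>M Q1)))"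
      unfolding Qm_def by (rule integral_distr) simp_all
    also have "\<dots> = (\<integral>c. (\<integral>p. h (g (c, p)) \<partial>(Q0 \<Otimes>\<^sub>M Q1)) \<partial>C)"
      using P.integral_fst'[OF int] by simp
    also have "\<dots> = ((\<integral>p. h (fst p) \<partial>(Q0 \<Otimes>\<^sub>M Q1)) + (\<integral>p. h (snd p) \<partial>(Q0 \<Otimes>\<^sub>M Q1))) / 2"
      unfolding C_def g_def by (subst integral_pmf_of_set) (simp_all add: UNIV_bool add.commute)
    also have "\<dots> = ((\<integral>x. h x \<partial>Q0) + (\<integral>x. h x \<partial>Q1)) / 2"
      using P01.integral_fst'[OF int0] P01.integral_fst'[OF int1] Q0.prob_space Q1.prob_space
      by simp
    finally show ?thesis .
  qed
  ultimately show ?thesis using that by blast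
qed

lemma
  fixes g :: "real \<Rightarrow> real"
  assumes Q: "prob_space Q" and sQ: "sets Q = sets borel"
    and g: "integrable lborel g" and [measurable]: "g \<in> borel_measurable borel"
  shows integrable_pair_translate: "integrable (Q \<Otimes>\<^sub>M lborel) (\<lambda>p. g (snd p - fst p))"
    and integral_pair_translate: "(\<integral>p. g (snd p - fst p) \<partial>(Q \<Otimes>\<^sub>M lborel)) = (\<integral>z. g z \<partial>lborel)"
proof -
  interpret Q: prob_space Q by fact
  interpret QL: pair_sigma_finite Q lborel ..
  have [measurable_cong]: "sets Q = sets borel" by fact
  have shift: "(\<integral>y. h (y - x) \<partial>lborel) = (\<integral>z. h z \<partial>lborel)" for x and h :: "real \<Rightarrow> real"
    using lborel_integral_real_affine[of 1 "\<lambda>y. h (y - x)" x] by simp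
  show int: "integrable (Q \<Otimes>\<^sub>M lborel) (\<lambda>p. g (snd p - fst p))"
  proof (rule QL.Fubini_integrable)
    show "(\<lambda>p. g (snd p - fst p)) \<in> borel_measurable (Q \<Otimes>\<^sub>M lborel)" by measurable
    show "integrable Q (\<lambda>x. \<integral>y. norm (g (snd (x, y) - fst (x, y))) \<partial>lborel)"
      using shift[of "\<lambda>z. norm (g z)"] by simp
    show "AE x in Q. integrable lborel (\<lambda>y. g (snd (x, y) - fst (x, y)))"
      using lborel_integrable_real_affine[OF g, of 1 "- _"] by simp
  qed
  have "(\<integral>p. g (snd p - fst p) \<partial>(Q \<Otimes>\<^sub>M lborel)) = (\<integral>x. \<integral>y. g (y - x) \<partial>lborel \<partial>Q)"
    using QL.integral_fst'[OF int] by simp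
  also have "\<dots> = (\<integral>z. g z \<partial>lborel)" using shift[of g] Q.prob_space by simp
  finally show "(\<integral>p. g (snd p - fst p) \<partial>(Q \<Otimes>\<^sub>M lborel)) = (\<integral>z. g z \<partial>lborel)" .
qed

section \<open>Input laws under a peak constraint\<close>

definition peak_law :: "real \<Rightarrow> real measure \<Rightarrow> bool" where
  "peak_law A Q \<longleftrightarrow> real_distribution Q \<and> (AE x in Q. 0 \<le> x \<and> x \<le> A)"

lemma peak_law_real_distribution: "peak_law A Q \<Longrightarrow> real_distribution Q"
  unfolding peak_law_def by simp

lemma peak_law_AE: "peak_law A Q \<Longrightarrow> AE x in Q. 0 \<le> x \<and> x \<le> A"
  unfolding peak_law_def by simp

lemma peak_law_iff_measure_outside:
  assumes "real_distribution Q"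
  shows "peak_law A Q \<longleftrightarrow> measure Q (- {0..A}) = 0"
proof -
  interpret real_distribution Q by fact
  have "measure Q (- {0..A}) = 0 \<longleftrightarrow> (AE x in Q. x \<notin> - {0..A})"
    by (rule prob_eq_0) simp
  then show ?thesis unfolding peak_law_def using assms by auto
qed

lemma admissible_iff_peak_law: "admissible A E Q \<longleftrightarrow> peak_law A Q \<and> (\<integral>x. x \<partial>Q) \<le> E"
proof (cases "real_distribution Q")
  case True
  then interpret real_distribution Q .
  have "measure Q {x. A < x} = 0 \<longleftrightarrow> (AE x in Q. x \<notin> {x. A < x})"
    by (rule prob_eq_0) simp
  then have "(AE x in Q. 0 \<le> x) \<and> measure Q {x. A < x} = 0 \<longleftrightarrow> (AE x in Q. 0 \<le> x \<and> x \<le> A)"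
    by (auto simp: not_less)
  with True show ?thesis
    unfolding admissible_def peak_law_def real_distribution_def by auto
next
  case False
  then show ?thesis
    unfolding admissible_def peak_law_def real_distribution_def real_distribution_axioms_def by auto
qed

lemma peak_law_return: "0 \<le> A \<Longrightarrow> peak_law A (return borel 0)"
  unfolding peak_law_def real_distribution_def real_distribution_axioms_def
  by (auto intro!: prob_space_return simp: AE_return)

lemma integrable_peak_law_id:
  assumes "peak_law A Q" shows "integrable Q (\<lambda>x. x)"
proof -
  interpret real_distribution Q using assms by (rule peak_law_real_distribution)
  show ?thesis
    using peak_law_AE[OF assms] by (intro integrable_const_bound[where B=A]) (auto elim: AE_mp)
qed

lemma peak_law_reflect: "peak_law A Q \<Longrightarrow> peak_law A (distr Q borel (\<lambda>x. A - x))"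
  unfolding peak_law_def real_distribution_def real_distribution_axioms_def
  by (auto intro!: prob_space.prob_space_distr simp: AE_distr_iff elim: AE_mp)

lemma integral_reflect_id:
  assumes "peak_law A Q"
  shows "(\<integral>x. x \<partial>distr Q borel (\<lambda>x. A - x)) = A - (\<integral>x. x \<partial>Q)"
proof -
  interpret real_distribution Q using assms by (rule peak_law_real_distribution)
  have "(\<integral>x. x \<partial>distr Q borel (\<lambda>x. A - x)) = (\<integral>x. A - x \<partial>Q)"
    by (subst integral_distr) simp_all
  also have "\<dots> = A - (\<integral>x. x \<partial>Q)"
    using integrable_peak_law_id[OF assms] prob_space by simp
  finally show ?thesis .
qed

lemma tight_peak_laws: "0 \<le> A \<Longrightarrow> (\<And>n. peak_law A (Q n)) \<Longrightarrow> tight Q"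
  unfolding tight_def
proof (intro conjI allI impI)
  assume "0 \<le> A" and Q: "\<And>n. peak_law A (Q n)"
  from Q show "real_distribution (Q n)" for n by (rule peak_law_real_distribution)
  fix e :: real assume "0 < e"
  have "measure (Q n) {-1<..A} = 1" for n
  proof -
    interpret real_distribution "Q n" using Q by (rule peak_law_real_distribution)
    have "AE x in Q n. x \<in> {-1<..A}"
      using peak_law_AE[OF Q, of n] by eventually_elim auto
    then have "prob {x \<in> space (Q n). x \<in> {-1<..A}} = 1"
      by (subst prob_Collect_eq_1) simp_all
    moreover have "{-1<..A} = {x. -1 < x \<and> x \<le> A}" by auto
    ultimately show ?thesis by simp
  qed
  then show "\<exists>a b. a < b \<and> (\<forall>n. 1 - e < measure (Q n) {a<..b})"
    using \<open>0 \<le> A\<close> \<open>0 < e\<close> by (intro exI[of _ "-1"] exI[of _ A]) auto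
qed

lemma peak_law_weak_limit:
  assumes Q: "\<And>n. peak_law A (Q n)" and M: "real_distribution M" and wc: "weak_conv_m Q M"
  shows "peak_law A M"
proof -
  interpret M: real_distribution M by fact
  have rd: "\<And>n. real_distribution (Q n)" using Q by (rule peak_law_real_distribution)
  have vanish: "AE x in M. g x = 0"
    if g_cont: "\<And>x. isCont g x" and g_bnd: "\<And>x. 0 \<le> g x \<and> g x \<le> 1"
      and g0: "\<And>x. 0 \<le> x \<Longrightarrow> x \<le> A \<Longrightarrow> g x = 0" for g :: "real \<Rightarrow> real"
  proof -
    have [measurable]: "g \<in> borel_measurable borel"
      using g_cont by (intro borel_measurable_continuous_onI continuous_at_imp_continuous_on) auto
    have "(\<lambda>n. integral\<^sup>L (Q n) g) \<longlonglongrightarrow> integral\<^sup>L M g"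
      by (rule weak_conv_imp_integral_bdd_continuous_conv[OF rd M wc, where B=1])
         (use g_cont g_bnd in auto)
    moreover have "integral\<^sup>L (Q n) g = 0" for n
    proof (rule integral_eq_zero_AE)
      show "AE x in Q n. g x = 0" using peak_law_AE[OF Q, of n] by eventually_elim (simp add: g0)
    qed
    ultimately have "integral\<^sup>L M g = 0" by (simp add: LIMSEQ_const_iff)
    moreover have "integrable M g"
      by (rule M.integrable_const_bound[where B=1]) (use g_bnd in auto)
    ultimately show ?thesis
      using integral_nonneg_eq_0_iff_AE[of M g] g_bnd by auto
  qed
  have "AE x in M. min 1 (max 0 (x - A)) = 0" "AE x in M. min 1 (max 0 (- x)) = 0"
    by (rule vanish; auto intro!: continuous_intros)+
  then have "AE x in M. 0 \<le> x \<and> x \<le> A"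
    by eventually_elim (auto simp: min_def max_def split: if_splits)
  then show ?thesis unfolding peak_law_def using M by auto
qed

section \<open>The output density of the Gaussian channel\<close>

definition output_density :: "real \<Rightarrow> real measure \<Rightarrow> real \<Rightarrow> real" where
  "output_density \<sigma> Q y = (\<integral>x. normal_density 0 \<sigma> (y - x) \<partial>Q)"

locale gaussian_noise =
  fixes \<sigma> :: real
  assumes sigma_pos: "0 < \<sigma>"
begin

abbreviation noise :: "real measure" where
  "noise \<equiv> density lborel (normal_density 0 \<sigma>)"

definition normal_peak :: real where
  "normal_peak = 1 / sqrt (2 * pi * \<sigma>\<^sup>2)"

lemma normal_peak_pos: "0 < normal_peak"
  unfolding normal_peak_def using sigma_pos by simp

lemma normal_density_eq: "normal_density 0 \<sigma> z = normal_peak * exp (- z\<^sup>2 / (2 * \<sigma>\<^sup>2))"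
  unfolding normal_density_def normal_peak_def by simp

lemma normal_density_le_peak: "normal_density 0 \<sigma> z \<le> normal_peak"
  unfolding normal_density_eq using normal_peak_pos by (simp add: mult_le_cancel_left1)

lemma ln_normal_density: "ln (normal_density 0 \<sigma> z) = ln normal_peak - z\<^sup>2 / (2 * \<sigma>\<^sup>2)"
  unfolding normal_density_eq using normal_peak_pos by (simp add: ln_mult)

lemma integrable_shifted_normal_density:
  assumes "real_distribution Q" shows "integrable Q (\<lambda>x. normal_density 0 \<sigma> (y - x))"
proof -
  interpret real_distribution Q by fact
  show ?thesis
    by (rule integrable_const_bound[where B=normal_peak]) (auto simp: normal_density_le_peak)
qed

lemma output_density_measurable[measurable]:
  assumes "real_distribution Q" shows "output_density \<sigma> Q \<in> borel_measurable borel"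
proof -
  interpret real_distribution Q by fact
  show ?thesis unfolding output_density_def[abs_def]
    by (rule borel_measurable_lebesgue_integral) measurable
qed

lemma output_density_le_peak:
  assumes "real_distribution Q" shows "output_density \<sigma> Q y \<le> normal_peak"
proof -
  interpret real_distribution Q by fact
  have "output_density \<sigma> Q y \<le> (\<integral>x. normal_peak \<partial>Q)" unfolding output_density_def
    using integrable_shifted_normal_density[OF assms] normal_density_le_peak
    by (intro integral_mono) auto
  then show ?thesis using prob_space by simp
qed

lemma output_density_weak_conv:
  assumes "\<And>n. real_distribution (Q n)" and "real_distribution M" and "weak_conv_m Q M"
  shows "(\<lambda>n. output_density \<sigma> (Q n) y) \<longlonglongrightarrow> output_density \<sigma> M y"
proof -
  have "isCont (\<lambda>x. normal_density 0 \<sigma> (y - x)) x" for x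
    unfolding normal_density_def using sigma_pos by (intro continuous_intros) auto
  then show ?thesis unfolding output_density_def
    by (intro weak_conv_imp_integral_bdd_continuous_conv[OF assms, where B=normal_peak])
       (auto simp: normal_density_le_peak)
qed

lemma nn_integral_channel:
  assumes "real_distribution Q" and [measurable]: "h \<in> borel_measurable (borel \<Otimes>\<^sub>M borel)"
  shows "(\<integral>\<^sup>+\<omega>. h (fst \<omega>, fst \<omega> + snd \<omega>) \<partial>(Q \<Otimes>\<^sub>M noise))
     = (\<integral>\<^sup>+x. \<integral>\<^sup>+y. ennreal (normal_density 0 \<sigma> (y - x)) * h (x, y) \<partial>lborel \<partial>Q)"
proof -
  interpret Q: real_distribution Q by fact
  interpret N: prob_space noise using sigma_pos by (rule prob_space_normal_density)
  interpret pair_sigma_finite Q noise ..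
  have "(\<integral>\<^sup>+\<omega>. h (fst \<omega>, fst \<omega> + snd \<omega>) \<partial>(Q \<Otimes>\<^sub>M noise))
      = (\<integral>\<^sup>+x. \<integral>\<^sup>+z. ennreal (normal_density 0 \<sigma> z) * h (x, x + z) \<partial>lborel \<partial>Q)"
    by (subst N.nn_integral_fst[symmetric]) (simp_all add: nn_integral_density)
  also have "\<dots> = (\<integral>\<^sup>+x. \<integral>\<^sup>+y. ennreal (normal_density 0 \<sigma> (y - x)) * h (x, y) \<partial>lborel \<partial>Q)"
  proof (rule nn_integral_cong)
    fix x
    show "(\<integral>\<^sup>+z. ennreal (normal_density 0 \<sigma> z) * h (x, x + z) \<partial>lborel)
        = (\<integral>\<^sup>+y. ennreal (normal_density 0 \<sigma> (y - x)) * h (x, y) \<partial>lborel)"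
      by (subst nn_integral_real_affine[where c=1 and t=x]) simp_all
  qed
  finally show ?thesis .
qed

lemma distr_output:
  assumes Q: "real_distribution Q"
  shows "distr (Q \<Otimes>\<^sub>M noise) lborel (\<lambda>(x, z). x + z) = density lborel (output_density \<sigma> Q)"
proof (rule measure_eqI)
  interpret Q: real_distribution Q by fact
  interpret QL: pair_sigma_finite Q lborel ..
  fix C assume "C \<in> sets (distr (Q \<Otimes>\<^sub>M noise) lborel (\<lambda>(x, z). x + z))"
  then have [measurable]: "C \<in> sets borel" by simp
  have "emeasure (distr (Q \<Otimes>\<^sub>M noise) lborel (\<lambda>(x, z). x + z)) C
      = (\<integral>\<^sup>+\<omega>. indicator C (fst \<omega> + snd \<omega>) \<partial>(Q \<Otimes>\<^sub>M noise))"
    by (subst nn_integral_indicator[symmetric], simp, subst nn_integral_distr)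
       (simp_all add: split_beta)
  also have "\<dots> = (\<integral>\<^sup>+y. \<integral>\<^sup>+x. ennreal (normal_density 0 \<sigma> (y - x)) * indicator C y \<partial>Q \<partial>lborel)"
    using nn_integral_channel[OF Q, of "\<lambda>p. indicator C (snd p)"] by (simp add: QL.Fubini')
  also have "\<dots> = (\<integral>\<^sup>+y. ennreal (output_density \<sigma> Q y) * indicator C y \<partial>lborel)"
    unfolding output_density_def using integrable_shifted_normal_density[OF Q]
    by (intro nn_integral_cong) (simp add: nn_integral_multc nn_integral_eq_integral)
  also have "\<dots> = emeasure (density lborel (output_density \<sigma> Q)) C"
    using output_density_measurable[OF Q] by (subst emeasure_density) simp_all
  finally show "emeasure (distr (Q \<Otimes>\<^sub>M noise) lborel (\<lambda>(x, z). x + z)) C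
      = emeasure (density lborel (output_density \<sigma> Q)) C" .
qed simp

lemma distr_input_output:
  assumes Q: "real_distribution Q"
  shows "distr (Q \<Otimes>\<^sub>M noise) (Q \<Otimes>\<^sub>M lborel) (\<lambda>\<omega>. (fst \<omega>, case \<omega> of (x, z) \<Rightarrow> x + z))
     = density (Q \<Otimes>\<^sub>M lborel) (\<lambda>p. ennreal (normal_density 0 \<sigma> (snd p - fst p)))"
  (is "distr _ _ ?f = ?D")
proof (rule measure_eqI)
  interpret Q: real_distribution Q by fact
  have [measurable_cong]: "sets (Q \<Otimes>\<^sub>M lborel) = sets (borel \<Otimes>\<^sub>M borel)"
    by (intro sets_pair_measure_cong) simp_all
  show "sets (distr (Q \<Otimes>\<^sub>M noise) (Q \<Otimes>\<^sub>M lborel) ?f) = sets ?D" by simp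
  fix C assume "C \<in> sets (distr (Q \<Otimes>\<^sub>M noise) (Q \<Otimes>\<^sub>M lborel) ?f)"
  then have [measurable]: "C \<in> sets (borel \<Otimes>\<^sub>M borel)" by simp
  have "emeasure (distr (Q \<Otimes>\<^sub>M noise) (Q \<Otimes>\<^sub>M lborel) ?f) C
      = (\<integral>\<^sup>+\<omega>. indicator C (fst \<omega>, fst \<omega> + snd \<omega>) \<partial>(Q \<Otimes>\<^sub>M noise))"
    by (subst nn_integral_indicator[symmetric], simp, subst nn_integral_distr)
       (simp_all add: split_beta)
  also have "\<dots> = (\<integral>\<^sup>+p. ennreal (normal_density 0 \<sigma> (snd p - fst p)) * indicator C p \<partial>(Q \<Otimes>\<^sub>M lborel))"
    using nn_integral_channel[OF Q, of "indicator C"] by (simp add: lborel.nn_integral_fst[symmetric])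
  also have "\<dots> = emeasure ?D C" by (subst emeasure_density) simp_all
  finally show "emeasure (distr (Q \<Otimes>\<^sub>M noise) (Q \<Otimes>\<^sub>M lborel) ?f) C = emeasure ?D C" .
qed

definition noise_entropy :: real where
  "noise_entropy = - (\<integral>z. normal_density 0 \<sigma> z * ln (normal_density 0 \<sigma> z) \<partial>lborel)"

definition output_entropy :: "real measure \<Rightarrow> real" where
  "output_entropy Q = - (\<integral>y. output_density \<sigma> Q y * ln (output_density \<sigma> Q y) \<partial>lborel)"

lemma integrable_normal_density_ln:
  "integrable lborel (\<lambda>z. normal_density 0 \<sigma> z * ln (normal_density 0 \<sigma> z))"
proof (rule Bochner_Integration.integrable_bound)
  let ?f = "\<lambda>z. \<bar>ln normal_peak\<bar> * normal_density 0 \<sigma> z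
                  + 1 / (2 * \<sigma>\<^sup>2) * (normal_density 0 \<sigma> z * (z - 0) ^ 2)"
  show "integrable lborel ?f"
    using sigma_pos by (intro Bochner_Integration.integrable_add integrable_mult_right
        integrable_normal_density integrable_normal_moment) simp_all
  show "(\<lambda>z. normal_density 0 \<sigma> z * ln (normal_density 0 \<sigma> z)) \<in> borel_measurable lborel" by simp
  show "AE z in lborel. norm (normal_density 0 \<sigma> z * ln (normal_density 0 \<sigma> z)) \<le> norm (?f z)"
  proof (rule AE_I2)
    fix z
    have p: "0 < normal_density 0 \<sigma> z" using sigma_pos by (rule normal_density_pos)
    have "\<bar>ln (normal_density 0 \<sigma> z)\<bar> \<le> \<bar>ln normal_peak\<bar> + z\<^sup>2 / (2 * \<sigma>\<^sup>2)"
      using abs_triangle_ineq4[of "ln normal_peak" "z\<^sup>2 / (2 * \<sigma>\<^sup>2)"]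
      unfolding ln_normal_density by simp
    then have "normal_density 0 \<sigma> z * \<bar>ln (normal_density 0 \<sigma> z)\<bar>
        \<le> normal_density 0 \<sigma> z * (\<bar>ln normal_peak\<bar> + z\<^sup>2 / (2 * \<sigma>\<^sup>2))"
      using p by (intro mult_left_mono) auto
    then show "norm (normal_density 0 \<sigma> z * ln (normal_density 0 \<sigma> z)) \<le> norm (?f z)"
      using p by (simp add: abs_mult field_simps)
  qed
qed

lemma char_noise: "char noise t = complex_of_real (exp (- (t * \<sigma>)\<^sup>2 / 2))"
proof -
  interpret S: prob_space std_normal_distribution by (rule prob_space_normal_density) simp
  have "distributed std_normal_distribution lborel (\<lambda>x. 0 + \<sigma> * x) (normal_density (0 + \<sigma> * 0) (\<bar>\<sigma>\<bar> * 1))"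
    using sigma_pos by (intro S.normal_density_affine) (simp_all add: distributed_def distr_id2)
  then have "distr std_normal_distribution lborel (\<lambda>x. \<sigma> * x) = noise"
    using sigma_pos unfolding distributed_def by simp
  moreover have "distr std_normal_distribution borel (\<lambda>x. \<sigma> * x)
      = distr std_normal_distribution lborel (\<lambda>x. \<sigma> * x)"
    by (rule distr_cong) simp_all
  ultimately have D: "distr std_normal_distribution borel (\<lambda>x. \<sigma> * x) = noise" by simp
  have "char noise t = (CLINT x|std_normal_distribution. iexp (t * (\<sigma> * x)))"
    unfolding D[symmetric] char_def by (subst integral_distr) simp_all
  also have "\<dots> = char std_normal_distribution (t * \<sigma>)"
    unfolding char_def by (simp add: mult.assoc)
  finally show ?thesis by (simp add: char_std_normal_distribution)
qed

lemma char_output: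
  assumes Q: "real_distribution Q"
  shows "char (density lborel (output_density \<sigma> Q)) t = char Q t * char noise t"
proof -
  interpret Q: real_distribution Q by fact
  interpret N: prob_space noise using sigma_pos by (rule prob_space_normal_density)
  interpret P: pair_prob_space Q noise ..
  have int: "integrable (Q \<Otimes>\<^sub>M noise) (\<lambda>\<omega>. iexp (t * fst \<omega>) * iexp (t * snd \<omega>))"
    using P.integrable_iexp[of "\<lambda>\<omega>. t * (fst \<omega> + snd \<omega>)"]
    by (simp add: exp_add[symmetric] distrib_left algebra_simps)
  have "char (density lborel (output_density \<sigma> Q)) t
      = (CLINT \<omega>|Q \<Otimes>\<^sub>M noise. iexp (t * fst \<omega>) * iexp (t * snd \<omega>))"
    unfolding distr_output[OF Q, symmetric] char_def
    by (subst integral_distr) (simp_all add: split_beta exp_add[symmetric] distrib_left algebra_simps)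
  also have "\<dots> = (CLINT x|Q. iexp (t * x) * char noise t)"
    using P.integral_fst'[OF int] unfolding char_def by simp
  finally show ?thesis unfolding char_def by simp
qed

lemma output_density_inj:
  assumes Q0: "real_distribution Q0" and Q1: "real_distribution Q1"
    and eq: "AE y in lborel. output_density \<sigma> Q0 y = output_density \<sigma> Q1 y"
  shows "Q0 = Q1"
proof -
  have D: "density lborel (output_density \<sigma> Q0) = density lborel (output_density \<sigma> Q1)"
    using eq output_density_measurable[OF Q0] output_density_measurable[OF Q1]
    by (intro density_cong) (auto elim: AE_mp)
  have "char Q0 t * char noise t = char Q1 t * char noise t" for t
    using char_output[OF Q0, of t] char_output[OF Q1, of t] by (simp only: D)
  then have "char Q0 = char Q1"
    by (intro ext) (simp add: char_noise)
  then show ?thesis by (rule Levy_uniqueness[OF Q0 Q1])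
qed

end

section \<open>Output entropy under a peak constraint\<close>

locale peak_limited_channel = gaussian_noise +
  fixes A :: real
  assumes A_pos: "0 < A"
begin

definition output_lower :: "real \<Rightarrow> real" where
  "output_lower y = normal_peak * exp (- (y\<^sup>2 + A\<^sup>2) / \<sigma>\<^sup>2)"

definition output_upper :: "real \<Rightarrow> real" where
  "output_upper y = normal_peak * exp (A\<^sup>2 / (2 * \<sigma>\<^sup>2)) * exp (- y\<^sup>2 / (4 * \<sigma>\<^sup>2))"

lemma output_lower_pos: "0 < output_lower y"
  unfolding output_lower_def using normal_peak_pos by simp

lemma output_upper_pos: "0 < output_upper y"
  unfolding output_upper_def using normal_peak_pos by simp

lemma shifted_normal_density_ge_lower:
  assumes "0 \<le> x" "x \<le> A" shows "output_lower y \<le> normal_density 0 \<sigma> (y - x)"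
proof -
  have "2 * y\<^sup>2 + 2 * x\<^sup>2 - (y - x)\<^sup>2 = (y + x)\<^sup>2" by (simp add: power2_eq_square algebra_simps)
  then have "(y - x)\<^sup>2 \<le> 2 * y\<^sup>2 + 2 * x\<^sup>2" using zero_le_power2[of "y + x"] by linarith
  moreover have "x\<^sup>2 \<le> A\<^sup>2" using assms by (simp add: power_mono)
  ultimately have "(y - x)\<^sup>2 \<le> 2 * (y\<^sup>2 + A\<^sup>2)" by simp
  then have "(y - x)\<^sup>2 / (2 * \<sigma>\<^sup>2) \<le> (y\<^sup>2 + A\<^sup>2) / \<sigma>\<^sup>2"
    using sigma_pos by (simp add: field_simps)
  then have "- (y\<^sup>2 + A\<^sup>2) / \<sigma>\<^sup>2 \<le> - (y - x)\<^sup>2 / (2 * \<sigma>\<^sup>2)"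
    unfolding minus_divide_left[symmetric] by linarith
  then show ?thesis
    unfolding output_lower_def normal_density_eq using normal_peak_pos by simp
qed

lemma shifted_normal_density_le_upper:
  assumes "0 \<le> x" "x \<le> A" shows "normal_density 0 \<sigma> (y - x) \<le> output_upper y"
proof -
  have "2 * (y - x)\<^sup>2 + 2 * x\<^sup>2 - y\<^sup>2 = (y - 2 * x)\<^sup>2" by (simp add: power2_eq_square algebra_simps)
  then have "y\<^sup>2 \<le> 2 * (y - x)\<^sup>2 + 2 * x\<^sup>2" using zero_le_power2[of "y - 2 * x"] by linarith
  moreover have "x\<^sup>2 \<le> A\<^sup>2" using assms by (simp add: power_mono)
  ultimately have "y\<^sup>2 \<le> 2 * (y - x)\<^sup>2 + 2 * A\<^sup>2" by simp
  then have "- (y - x)\<^sup>2 / (2 * \<sigma>\<^sup>2) \<le> A\<^sup>2 / (2 * \<sigma>\<^sup>2) + - y\<^sup>2 / (4 * \<sigma>\<^sup>2)"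
    using sigma_pos by (simp add: field_simps)
  then have "exp (- (y - x)\<^sup>2 / (2 * \<sigma>\<^sup>2)) \<le> exp (A\<^sup>2 / (2 * \<sigma>\<^sup>2)) * exp (- y\<^sup>2 / (4 * \<sigma>\<^sup>2))"
    by (simp add: exp_add[symmetric])
  then show ?thesis unfolding output_upper_def normal_density_eq using normal_peak_pos by simp
qed

lemma
  assumes Q: "peak_law A Q"
  shows output_density_ge_lower: "output_lower y \<le> output_density \<sigma> Q y"
    and output_density_le_upper: "output_density \<sigma> Q y \<le> output_upper y"
proof -
  interpret real_distribution Q using Q by (rule peak_law_real_distribution)
  have int: "integrable Q (\<lambda>x. normal_density 0 \<sigma> (y - x))"
    by (rule integrable_shifted_normal_density) unfold_locales
  have "(\<integral>x. output_lower y \<partial>Q) \<le> output_density \<sigma> Q y" unfolding output_density_def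
    using peak_law_AE[OF Q] int shifted_normal_density_ge_lower
    by (intro integral_mono_AE) (auto elim: AE_mp)
  then show "output_lower y \<le> output_density \<sigma> Q y" using prob_space by simp
  have "output_density \<sigma> Q y \<le> (\<integral>x. output_upper y \<partial>Q)" unfolding output_density_def
    using peak_law_AE[OF Q] int shifted_normal_density_le_upper
    by (intro integral_mono_AE) (auto elim: AE_mp)
  then show "output_density \<sigma> Q y \<le> output_upper y" using prob_space by simp
qed

lemma output_density_pos: "peak_law A Q \<Longrightarrow> 0 < output_density \<sigma> Q y"
  using output_density_ge_lower output_lower_pos by (rule order.strict_trans2[rotated])

lemma abs_ln_output_density_le:
  assumes Q: "peak_law A Q"
  shows "\<bar>ln (output_density \<sigma> Q y)\<bar> \<le> \<bar>ln normal_peak\<bar> + (y\<^sup>2 + A\<^sup>2) / \<sigma>\<^sup>2"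
proof -
  have "ln (output_lower y) \<le> ln (output_density \<sigma> Q y)"
    using output_density_ge_lower[OF Q, of y] output_lower_pos[of y] by simp
  moreover have "ln (output_density \<sigma> Q y) \<le> ln normal_peak"
    using output_density_pos[OF Q, of y] output_density_le_peak[OF peak_law_real_distribution[OF Q], of y]
    by simp
  moreover have "ln (output_lower y) = ln normal_peak - (y\<^sup>2 + A\<^sup>2) / \<sigma>\<^sup>2"
    unfolding output_lower_def using normal_peak_pos by (simp add: ln_mult diff_divide_distrib add_divide_distrib)
  moreover have "0 \<le> (y\<^sup>2 + A\<^sup>2) / \<sigma>\<^sup>2" by simp
  ultimately show ?thesis by linarith
qed

definition envelope :: "real \<Rightarrow> real" where
  "envelope y = output_upper y * (\<bar>ln normal_peak\<bar> + (y\<^sup>2 + A\<^sup>2) / \<sigma>\<^sup>2)"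

lemma envelope_measurable[measurable]: "envelope \<in> borel_measurable borel"
  unfolding envelope_def[abs_def] output_upper_def by measurable

lemma integrable_envelope: "integrable lborel envelope"
proof -
  define s where "s = sqrt 2 * \<sigma>"
  have s: "0 < s" "s\<^sup>2 = 2 * \<sigma>\<^sup>2" unfolding s_def using sigma_pos by (simp_all add: power_mult_distrib)
  define K where "K = normal_peak * exp (A\<^sup>2 / (2 * \<sigma>\<^sup>2)) * sqrt (2 * pi * s\<^sup>2)"
  have "exp (- y\<^sup>2 / (4 * \<sigma>\<^sup>2)) = sqrt (2 * pi * s\<^sup>2) * normal_density 0 s y" for y
    unfolding normal_density_def s(2) using sigma_pos by (simp add: field_simps)
  then have eq: "envelope = (\<lambda>y. K * (\<bar>ln normal_peak\<bar> + A\<^sup>2 / \<sigma>\<^sup>2) * normal_density 0 s y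
      + K / \<sigma>\<^sup>2 * (normal_density 0 s y * (y - 0) ^ 2))"
    unfolding envelope_def[abs_def] output_upper_def K_def by (simp add: field_simps add_divide_distrib)
  show ?thesis unfolding eq using s(1) by (intro Bochner_Integration.integrable_add integrable_mult_right
        integrable_normal_density integrable_normal_moment) simp_all
qed

lemma abs_plogp_output_density_le:
  assumes Q: "peak_law A Q"
  shows "\<bar>output_density \<sigma> Q y * ln (output_density \<sigma> Q y)\<bar> \<le> envelope y"
  unfolding envelope_def abs_mult
  using output_density_pos[OF Q, of y] output_density_le_upper[OF Q, of y]
    abs_ln_output_density_le[OF Q, of y] output_upper_pos[of y]
  by (intro mult_mono) auto

lemma integrable_output_plogp:
  assumes Q: "peak_law A Q"
  shows "integrable lborel (\<lambda>y. output_density \<sigma> Q y * ln (output_density \<sigma> Q y))"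
proof (rule Bochner_Integration.integrable_bound[OF integrable_envelope])
  note [measurable] = output_density_measurable[OF peak_law_real_distribution[OF Q]]
  show "(\<lambda>y. output_density \<sigma> Q y * ln (output_density \<sigma> Q y)) \<in> borel_measurable lborel"
    by measurable
  show "AE y in lborel. norm (output_density \<sigma> Q y * ln (output_density \<sigma> Q y)) \<le> norm (envelope y)"
    using abs_plogp_output_density_le[OF Q] by (intro AE_I2) (simp add: order_trans[OF _ abs_ge_self])
qed

lemma
  assumes Q: "peak_law A Q"
  shows integrable_channel_ln_output_density:
      "integrable (Q \<Otimes>\<^sub>M lborel)
         (\<lambda>p. normal_density 0 \<sigma> (snd p - fst p) * ln (output_density \<sigma> Q (snd p)))"
    and integral_channel_ln_output_density:
      "(\<integral>p. normal_density 0 \<sigma> (snd p - fst p) * ln (output_density \<sigma> Q (snd p)) \<partial>(Q \<Otimes>\<^sub>M lborel))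
         = (\<integral>y. output_density \<sigma> Q y * ln (output_density \<sigma> Q y) \<partial>lborel)"
proof -
  interpret Q: real_distribution Q using Q by (rule peak_law_real_distribution)
  interpret QL: pair_sigma_finite Q lborel ..
  note [measurable] = output_density_measurable[OF Q.real_distribution_axioms]
  have env: "integrable (Q \<Otimes>\<^sub>M lborel) (\<lambda>p. envelope (snd p))"
    using integrable_envelope by (intro QL.Fubini_integrable) simp_all
  have bound: "AE p in Q \<Otimes>\<^sub>M lborel.
      norm (normal_density 0 \<sigma> (snd p - fst p) * ln (output_density \<sigma> Q (snd p))) \<le> norm (envelope (snd p))"
  proof (rule QL.AE_pair_measure)
    show "AE x in Q. AE y in lborel. norm (normal_density 0 \<sigma> (snd (x, y) - fst (x, y))
        * ln (output_density \<sigma> Q (snd (x, y)))) \<le> norm (envelope (snd (x, y)))"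
      using peak_law_AE[OF Q]
    proof eventually_elim
      case (elim x)
      have "\<bar>normal_density 0 \<sigma> (y - x) * ln (output_density \<sigma> Q y)\<bar> \<le> envelope y" for y
        unfolding envelope_def abs_mult
        using shifted_normal_density_le_upper[of x y] elim abs_ln_output_density_le[OF Q, of y]
          output_upper_pos[of y]
        by (intro mult_mono) auto
      then show ?case by (intro AE_I2) (simp add: order_trans[OF _ abs_ge_self])
    qed
  qed measurable
  show int: "integrable (Q \<Otimes>\<^sub>M lborel)
      (\<lambda>p. normal_density 0 \<sigma> (snd p - fst p) * ln (output_density \<sigma> Q (snd p)))"
    by (rule Bochner_Integration.integrable_bound[OF env _ bound]) measurable
  show "(\<integral>p. normal_density 0 \<sigma> (snd p - fst p) * ln (output_density \<sigma> Q (snd p)) \<partial>(Q \<Otimes>\<^sub>M lborel))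
      = (\<integral>y. output_density \<sigma> Q y * ln (output_density \<sigma> Q y) \<partial>lborel)"
    using QL.integral_snd[of "\<lambda>x y. normal_density 0 \<sigma> (y - x) * ln (output_density \<sigma> Q y)"] int
    unfolding output_density_def by (simp add: split_beta')
qed

lemma chan_MI_eq_entropy_diff:
  assumes Q: "peak_law A Q"
  shows "chan_MI \<sigma> Q = output_entropy Q - noise_entropy"
proof -
  interpret Q: real_distribution Q using Q by (rule peak_law_real_distribution)
  interpret N: prob_space noise using sigma_pos by (rule prob_space_normal_density)
  interpret P: pair_prob_space Q noise ..
  interpret I: information_space "Q \<Otimes>\<^sub>M noise" "exp 1"
    by unfold_locales simp
  let ?Y = "\<lambda>(x, z). x + z :: real"
  let ?\<phi> = "\<lambda>p. normal_density 0 \<sigma> (snd p - fst p)"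
  note [measurable] = output_density_measurable[OF Q.real_distribution_axioms]
  have sQL: "sets (Q \<Otimes>\<^sub>M lborel) = sets (borel \<Otimes>\<^sub>M borel)"
    by (intro sets_pair_measure_cong) simp_all
  have "chan_MI \<sigma> Q = prob_space.mutual_information (Q \<Otimes>\<^sub>M noise) (exp 1) Q lborel fst ?Y"
    unfolding chan_MI_def chan_space_def prob_space.mutual_information_def[OF P.prob_space_axioms]
    by (intro arg_cong2[where f="KL_divergence (exp 1)"] arg_cong2[where f="(\<Otimes>\<^sub>M)"]
        distr_cong sQL[symmetric]) simp_all
  also have "\<dots> = (\<integral>p. ?\<phi> p * log (exp 1) (?\<phi> p / (1 * output_density \<sigma> Q (snd p))) \<partial>(Q \<Otimes>\<^sub>M lborel))"
  proof (rule I.mutual_information_distr[OF Q.sigma_finite_measure_axioms lborel.sigma_finite_measure_axioms])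
    show "distributed (Q \<Otimes>\<^sub>M noise) Q fst (\<lambda>x. ennreal 1)"
      unfolding distributed_def using N.distr_pair_fst by (simp add: density_1)
    show "distributed (Q \<Otimes>\<^sub>M noise) lborel ?Y (\<lambda>y. ennreal (output_density \<sigma> Q y))"
      unfolding distributed_def using distr_output[OF Q.real_distribution_axioms] by simp
    show "distributed (Q \<Otimes>\<^sub>M noise) (Q \<Otimes>\<^sub>M lborel) (\<lambda>\<omega>. (fst \<omega>, ?Y \<omega>)) (\<lambda>p. ennreal (?\<phi> p))"
      unfolding distributed_def using distr_input_output[OF Q.real_distribution_axioms] by simp
  qed (simp_all add: less_imp_le[OF output_density_pos[OF Q]])
  also have "\<dots> = (\<integral>p. ?\<phi> p * ln (?\<phi> p) - ?\<phi> p * ln (output_density \<sigma> Q (snd p)) \<partial>(Q \<Otimes>\<^sub>M lborel))"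
    using normal_density_pos[OF sigma_pos] output_density_pos[OF Q]
    by (intro Bochner_Integration.integral_cong)
       (simp_all add: log_def ln_div right_diff_distrib less_imp_neq[symmetric])
  also have "\<dots> = output_entropy Q - noise_entropy"
    using integrable_pair_translate[OF Q.prob_space_axioms _ integrable_normal_density_ln]
      integral_pair_translate[OF Q.prob_space_axioms _ integrable_normal_density_ln]
      integrable_channel_ln_output_density[OF Q] integral_channel_ln_output_density[OF Q]
    unfolding output_entropy_def noise_entropy_def by simp
  finally show ?thesis .
qed

lemma output_entropy_le:
  assumes Q: "peak_law A Q" shows "output_entropy Q \<le> (\<integral>y. envelope y \<partial>lborel)"
proof -
  have "(\<integral>y. - (output_density \<sigma> Q y * ln (output_density \<sigma> Q y)) \<partial>lborel) \<le> (\<integral>y. envelope y \<partial>lborel)"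
    using integrable_output_plogp[OF Q] integrable_envelope abs_plogp_output_density_le[OF Q]
    by (intro integral_mono) (auto simp: abs_le_iff)
  then show ?thesis unfolding output_entropy_def by simp
qed

lemma output_entropy_reflect:
  assumes Q: "peak_law A Q"
  shows "output_entropy (distr Q borel (\<lambda>x. A - x)) = output_entropy Q"
proof -
  interpret real_distribution Q using Q by (rule peak_law_real_distribution)
  have "output_density \<sigma> (distr Q borel (\<lambda>x. A - x)) y = output_density \<sigma> Q (A - y)" for y
    unfolding output_density_def normal_density_def
    by (subst integral_distr) (simp_all add: power2_commute algebra_simps)
  moreover have "(\<integral>y. output_density \<sigma> Q y * ln (output_density \<sigma> Q y) \<partial>lborel)
      = \<bar>-1\<bar> *\<^sub>R (\<integral>y. output_density \<sigma> Q (A + -1 * y) * ln (output_density \<sigma> Q (A + -1 * y)) \<partial>lborel)"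
    by (rule lborel_integral_real_affine) simp
  ultimately show ?thesis unfolding output_entropy_def by simp
qed

lemma output_entropy_weak_conv:
  assumes Q: "\<And>n. peak_law A (Q n)" and M: "peak_law A M" and wc: "weak_conv_m Q M"
  shows "(\<lambda>n. output_entropy (Q n)) \<longlonglongrightarrow> output_entropy M"
proof -
  have rd: "\<And>n. real_distribution (Q n)" using Q by (rule peak_law_real_distribution)
  have rdM: "real_distribution M" using M by (rule peak_law_real_distribution)
  note [measurable] = output_density_measurable[OF rdM] output_density_measurable[OF rd]
  have "(\<lambda>n. \<integral>y. output_density \<sigma> (Q n) y * ln (output_density \<sigma> (Q n) y) \<partial>lborel)
      \<longlonglongrightarrow> (\<integral>y. output_density \<sigma> M y * ln (output_density \<sigma> M y) \<partial>lborel)"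
  proof (rule integral_dominated_convergence[where w=envelope])
    show "AE y in lborel. (\<lambda>n. output_density \<sigma> (Q n) y * ln (output_density \<sigma> (Q n) y))
        \<longlonglongrightarrow> output_density \<sigma> M y * ln (output_density \<sigma> M y)"
      using output_density_weak_conv[OF rd rdM wc] output_density_pos[OF M, THEN less_imp_neq, THEN not_sym]
      by (intro AE_I2 tendsto_intros) auto
    show "AE y in lborel. norm (output_density \<sigma> (Q n) y * ln (output_density \<sigma> (Q n) y)) \<le> envelope y"
      for n
      using abs_plogp_output_density_le[OF Q] by simp
  qed (simp_all add: integrable_envelope)
  then show ?thesis unfolding output_entropy_def by (rule tendsto_minus)
qed

lemma exists_max_output_entropy:
  obtains Q where "peak_law A Q" and "\<And>Q'. peak_law A Q' \<Longrightarrow> output_entropy Q' \<le> output_entropy Q"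
proof -
  let ?H = "output_entropy ` {Q. peak_law A Q}"
  define H where "H = Sup ?H"
  have ne: "?H \<noteq> {}" using peak_law_return[of A] A_pos by auto
  have bdd: "bdd_above ?H" using output_entropy_le by (auto intro!: bdd_aboveI)
  have le_H: "output_entropy Q \<le> H" if "peak_law A Q" for Q
    unfolding H_def using that bdd by (intro cSup_upper) auto
  have "\<exists>Q. peak_law A Q \<and> H - 1 / Suc n < output_entropy Q" for n
    using less_cSup_iff[OF ne bdd, of "H - 1 / Suc n"] unfolding H_def by auto
  then obtain Q where Q: "\<And>n. peak_law A (Q n)" and near: "\<And>n. H - 1 / Suc n < output_entropy (Q n)"
    by metis
  have "tight Q" using A_pos Q by (intro tight_peak_laws[of A]) auto
  then obtain r M where r: "strict_mono r" and "real_distribution M" and wc: "weak_conv_m (Q \<circ> r) M"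
    using tight_imp_convergent_subsubsequence[of Q id] by (auto simp: strict_mono_id)
  have Qr: "\<And>n. peak_law A ((Q \<circ> r) n)" using Q by simp
  have M: "peak_law A M" by (rule peak_law_weak_limit[OF Qr \<open>real_distribution M\<close> wc])
  have "(\<lambda>n. output_entropy ((Q \<circ> r) n)) \<longlonglongrightarrow> H"
  proof (rule tendsto_sandwich[where f="\<lambda>n. H - 1 / Suc (r n)" and h="\<lambda>n. H"])
    have "filterlim (\<lambda>n. real (Suc (r n))) at_top sequentially"
      using filterlim_compose[OF filterlim_Suc filterlim_subseq[OF r]]
      by (rule filterlim_compose[OF filterlim_real_sequentially])
    then have "(\<lambda>n. 1 / real (Suc (r n))) \<longlonglongrightarrow> 0"
      by (intro tendsto_divide_0[OF tendsto_const]) (simp add: filterlim_at_top_imp_at_infinity)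
    then show "(\<lambda>n. H - 1 / Suc (r n)) \<longlonglongrightarrow> H"
      using tendsto_diff[OF tendsto_const[of H]] by fastforce
  qed (use near[THEN less_imp_le] le_H Qr in auto)
  with output_entropy_weak_conv[OF Qr M wc] have "output_entropy M = H"
    by (rule LIMSEQ_unique)
  with M le_H that show ?thesis by simp
qed

lemma max_output_entropy_unique:
  assumes Q0: "peak_law A Q0" and Q1: "peak_law A Q1"
    and max0: "\<And>Q. peak_law A Q \<Longrightarrow> output_entropy Q \<le> output_entropy Q0"
    and max1: "\<And>Q. peak_law A Q \<Longrightarrow> output_entropy Q \<le> output_entropy Q1"
  shows "Q0 = Q1"
proof -
  have rd0: "real_distribution Q0" and rd1: "real_distribution Q1"
    using Q0 Q1 by (simp_all add: peak_law_real_distribution)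
  obtain Qm where rdm: "real_distribution Qm" and avg: "\<And>(h :: real \<Rightarrow> real) B.
      h \<in> borel_measurable borel \<Longrightarrow> (\<And>x. \<bar>h x\<bar> \<le> B) \<Longrightarrow>
      (\<integral>x. h x \<partial>Qm) = ((\<integral>x. h x \<partial>Q0) + (\<integral>x. h x \<partial>Q1)) / 2"
    using exists_mixture[OF rd0 rd1] by blast
  have "measure Qm (- {0..A}) = (measure Q0 (- {0..A}) + measure Q1 (- {0..A})) / 2"
    using avg[of "indicator (- {0..A})" 1]
    by (simp add: real_distribution.space_eq_univ[OF rdm] real_distribution.space_eq_univ[OF rd0]
        real_distribution.space_eq_univ[OF rd1])
  then have Qm: "peak_law A Qm"
    using Q0 Q1 by (simp add: peak_law_iff_measure_outside rd0 rd1 rdm)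
  define p0 where "p0 = output_density \<sigma> Q0"
  define p1 where "p1 = output_density \<sigma> Q1"
  define pm where "pm = output_density \<sigma> Qm"
  have pm: "pm y = (p0 y + p1 y) / 2" for y
    unfolding pm_def p0_def p1_def output_density_def
    by (rule avg[where B=normal_peak]) (auto simp: normal_density_le_peak)
  define D where "D y = (p0 y * ln (p0 y) + p1 y * ln (p1 y)) / 2 - pm y * ln (pm y)" for y
  have pos: "0 < p0 y" "0 < p1 y" for y
    unfolding p0_def p1_def using Q0 Q1 by (simp_all add: output_density_pos)
  have D_nonneg: "0 \<le> D y" for y
    unfolding D_def pm using xlnx_midpoint_convex(1)[OF pos] by simp
  have int: "integrable lborel (\<lambda>y. p0 y * ln (p0 y))" "integrable lborel (\<lambda>y. p1 y * ln (p1 y))"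
    "integrable lborel (\<lambda>y. pm y * ln (pm y))"
    unfolding p0_def p1_def pm_def using Q0 Q1 Qm by (simp_all add: integrable_output_plogp)
  have "output_entropy Q0 = output_entropy Q1" using max0 max1 Q0 Q1 by (auto intro: antisym)
  then have "(\<integral>y. D y \<partial>lborel) = output_entropy Qm - output_entropy Q0"
    unfolding D_def using int unfolding output_entropy_def p0_def p1_def pm_def by simp
  then have "(\<integral>y. D y \<partial>lborel) \<le> 0" using max0[OF Qm] by simp
  moreover have "0 \<le> (\<integral>y. D y \<partial>lborel)" using D_nonneg by (simp add: integral_nonneg_AE)
  ultimately have "(\<integral>y. D y \<partial>lborel) = 0" by (rule antisym)
  moreover have "integrable lborel D" unfolding D_def[abs_def] using int by simp
  ultimately have "AE y in lborel. D y = 0"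
    using integral_nonneg_eq_0_iff_AE[of lborel D] D_nonneg by simp
  then have "AE y in lborel. output_density \<sigma> Q0 y = output_density \<sigma> Q1 y"
    using xlnx_midpoint_convex(2)[OF pos] unfolding D_def pm p0_def p1_def by (auto elim: AE_mp)
  then show ?thesis by (rule output_density_inj[OF rd0 rd1])
qed

lemma max_output_entropy_mean:
  assumes Q: "peak_law A Q" and max: "\<And>Q'. peak_law A Q' \<Longrightarrow> output_entropy Q' \<le> output_entropy Q"
  shows "(\<integral>x. x \<partial>Q) = A / 2"
proof -
  have "distr Q borel (\<lambda>x. A - x) = Q"
    using max_output_entropy_unique[OF peak_law_reflect[OF Q] Q _ max]
      output_entropy_reflect[OF Q] max by simp
  then have "(\<integral>x. x \<partial>Q) = A - (\<integral>x. x \<partial>Q)" using integral_reflect_id[OF Q] by simp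
  then show ?thesis by simp
qed

lemma capacity_achieved_by_max_output_entropy:
  assumes Qs: "peak_law A Qs"
    and max: "\<And>Q. peak_law A Q \<Longrightarrow> output_entropy Q \<le> output_entropy Qs"
    and E: "A / 2 \<le> E"
  shows "capacity \<sigma> A E = chan_MI \<sigma> Qs"
    and "achieves_capacity \<sigma> A E Q \<longleftrightarrow> Q = Qs"
proof -
  have Qs_adm: "admissible A E Qs"
    using Qs E max_output_entropy_mean[OF Qs max] by (simp add: admissible_iff_peak_law)
  show cap: "capacity \<sigma> A E = chan_MI \<sigma> Qs"
    unfolding capacity_def
  proof (rule cSup_eq_maximum)
    show "chan_MI \<sigma> Qs \<in> chan_MI \<sigma> ` {Q. admissible A E Q}" using Qs_adm by simp
    show "v \<le> chan_MI \<sigma> Qs" if "v \<in> chan_MI \<sigma> ` {Q. admissible A E Q}" for v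
      using that max Qs by (auto simp: admissible_iff_peak_law chan_MI_eq_entropy_diff)
  qed
  show "achieves_capacity \<sigma> A E Q \<longleftrightarrow> Q = Qs"
  proof
    assume "achieves_capacity \<sigma> A E Q"
    then have Q: "peak_law A Q" and "output_entropy Q = output_entropy Qs"
      using Qs unfolding achieves_capacity_def cap
      by (auto simp: admissible_iff_peak_law chan_MI_eq_entropy_diff)
    then show "Q = Qs" using max_output_entropy_unique[OF Q Qs _ max] max by simp
  qed (use Qs_adm cap in \<open>simp add: achieves_capacity_def\<close>)
qed

end

theorem lemma1:
  fixes \<sigma> A \<alpha> :: real
  assumes "\<sigma> > 0" and "A > 0" and "1/2 < \<alpha>" and "\<alpha> \<le> 1"
  shows "(\<exists>!Q. achieves_capacity \<sigma> A (\<alpha> * A) Q)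
    \<and> (\<forall>Q. achieves_capacity \<sigma> A (\<alpha> * A) Q \<longrightarrow> (\<integral>x. x \<partial>Q) / A = 1/2)
    \<and> capacity \<sigma> A (\<alpha> * A) = capacity \<sigma> A (A / 2)"
proof -
  interpret peak_limited_channel \<sigma> A using assms by unfold_locales
  obtain Qs where Qs: "peak_law A Qs"
    and max: "\<And>Q. peak_law A Q \<Longrightarrow> output_entropy Q \<le> output_entropy Qs"
    using exists_max_output_entropy by blast
  have "A / 2 \<le> \<alpha> * A" using assms by simp
  note opt = capacity_achieved_by_max_output_entropy[OF Qs max this]
    and half = capacity_achieved_by_max_output_entropy[OF Qs max order.refl]
  have "(\<integral>x. x \<partial>Qs) / A = 1/2"
    using max_output_entropy_mean[OF Qs max] assms by simp
  then show ?thesis using opt half by auto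
qed

end
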